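(* Let $1\le m\le n$ in type $B$ and $1\le m\le n-1$ in types $C$ and $D$, and let $\psi_m$ be the map sending $t_{ij}(u)$ ($m+1\le i,j\le(m+1)'$) to the quasideterminant of the submatrix of $T(u)$ with rows $1,\dots,m,i$ and columns $1,\dots,m,j$, with the $(i,j)$ entry $t_{ij}(u)$ boxed. Then in $\mathrm X(\mathfrak g_N)$ $$[\,t_{ab}(u),\psi_m(t_{ij}(v))\,]=0\qquad\text{for all }1\le a,b\le m,\ m+1\le i,j\le (m+1)'.$$
   Context: Let $n\ge 1$ and let $\mathfrak g_N$ be one of: $\mathfrak o_N$ with $N=2n+1$ (type $B_n$), $\mathfrak{sp}_N$ with $N=2n$ (type $C_n$), or $\mathfrak o_N$ with $N=2n$ (type $D_n$). For $1\le i\le N$ set $i'=N-i+1$. In the symplectic case put $\varepsilon_i=1$ for $1\le i\le n$ and $\varepsilon_i=-1$ for $n+1\le i\le 2n$. Set $\theta_{ij}=1$ in the orthogonal case and $\theta_{ij}=\varepsilon_i\varepsilon_j$ in the symplectic case, and $\kappa=N/2-1$ in the orthogonal case, $\kappa=N/2+1$ in the symplectic case. Let $e_{ij}$ ($1\le i,j\le N$) be the matrix units of $\mathrm{End}\,\mathbb C^N$, $P=\sum_{i,j}e_{ij}\otimes e_{ji}$, $Q=\sum_{i,j}\theta_{ij}\,e_{ij}\otimes e_{i'j'}$, and $R(u)=1-\frac{P}{u}+\frac{Q}{u-\kappa}$. For $C\in\mathrm{End}\,\mathbb C^N\otimes\mathrm{End}\,\mathbb C^N$ and $1\le a<b\le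 m$, $C_{ab}$ denotes the element of $(\mathrm{End}\,\mathbb C^N)^{\otimes m}$ acting as $C$ on the $a$-th and $b$-th tensor factors and as the identity on the others; for $X=\sum_{i,j} e_{ij}\otimes X_{ij}\in\mathrm{End}\,\mathbb C^N\otimes\mathcal A$, $X_a=\sum_{i,j}1^{\otimes(a-1)}\otimes e_{ij}\otimes 1^{\otimes(m-a)}\otimes X_{ij}$. The extended Yangian $\mathrm X(\mathfrak g_N)$ is the unital associative $\mathbb C$-algebra with generators $t_{ij}^{(r)}$ ($1\le i,j\le N$, $r\ge1$) subject to $R_{12}(u-v)T_1(u)T_2(v)=T_2(v)T_1(u)R_{12}(u-v)$, where $t_{ij}(u)=\delta_{ij}+\sum_{r\ge1}t_{ij}^{(r)}u^{-r}$ and $T(u)=\sum_{i,j}e_{ij}\otimes t_{ij}(u)$ (the relation is read after multiplying both sides by $u-v$ and $u-v-\kappa$, as an identity of formal series). Quasideterminants: for a square matrix $A=[a_{ij}]$ over a ring such that the matrix $A^{ij}$ obtained by deleting row $i$ and column $j$ is invertible, $|A|_{ij}=a_{ij}-r_i^{j}(A^{ij})^{-1}c_j^{i}$, where $r_i^j$ is the $i$-th row of $A$ with $a_{ij}$ removed and $c_j^i$ is the $j$-th column with $a_{ij}$ removed; it is denoted by writing the matrix with the entry $a_{ij}$ boxed. *)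

theory Defs
  imports Complex_Main "HOL-Computational_Algebra.Formal_Power_Series"
begin

class complex_algebra_1 = ring_1 +
  fixes scaleC :: "complex \<Rightarrow> 'a \<Rightarrow> 'a" (infixr "*\<^sub>C" 75)
  assumes scaleC_add_right: "c *\<^sub>C (x + y) = c *\<^sub>C x + c *\<^sub>C y"
    and scaleC_add_left: "(c + d) *\<^sub>C x = c *\<^sub>C x + d *\<^sub>C x"
    and scaleC_scaleC: "c *\<^sub>C (d *\<^sub>C x) = (c * d) *\<^sub>C x"
    and scaleC_one: "1 *\<^sub>C x = x"
    and mult_scaleC_left: "(c *\<^sub>C x) * y = c *\<^sub>C (x * y)"
    and mult_scaleC_right: "x * (c *\<^sub>C y) = c *\<^sub>C (x * y)"

datatype cartan_type = TypeB | TypeC | TypeD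

definition dimN :: "cartan_type \<Rightarrow> nat \<Rightarrow> nat" where
  "dimN X n = (if X = TypeB then 2 * n + 1 else 2 * n)"

definition orthogonal :: "cartan_type \<Rightarrow> bool" where
  "orthogonal X \<longleftrightarrow> X \<noteq> TypeC"

definition primed :: "cartan_type \<Rightarrow> nat \<Rightarrow> nat \<Rightarrow> nat" where
  "primed X n i = dimN X n + 1 - i"

definition epsilon :: "nat \<Rightarrow> nat \<Rightarrow> complex" where
  "epsilon n i = (if i \<le> n then 1 else -1)"

definition theta :: "cartan_type \<Rightarrow> nat \<Rightarrow> nat \<Rightarrow> nat \<Rightarrow> complex" where
  "theta X n i j = (if orthogonal X then 1 else epsilon n i * epsilon n j)"

definition kappa :: "cartan_type \<Rightarrow> nat \<Rightarrow> complex" where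
  "kappa X n = (if orthogonal X then of_nat (dimN X n) / 2 - 1 else of_nat (dimN X n) / 2 + 1)"

text \<open>Generators: tt i j r = t_ij^(r) for r \<ge> 1 (the value at r = 0 is ignored).
  tcoef tt i j r is the coefficient of u^(-r) in t_ij(u), with t_ij^(0) = delta_ij.\<close>
definition tcoef :: "(nat \<Rightarrow> nat \<Rightarrow> nat \<Rightarrow> 'a::ring_1) \<Rightarrow> nat \<Rightarrow> nat \<Rightarrow> nat \<Rightarrow> 'a" where
  "tcoef tt i j r = (if r = 0 then (if i = j then 1 else 0) else tt i j r)"

definition tser :: "(nat \<Rightarrow> nat \<Rightarrow> nat \<Rightarrow> 'a::ring_1) \<Rightarrow> nat \<Rightarrow> nat \<Rightarrow> 'a fps" where
  "tser tt i j = Abs_fps (tcoef tt i j)"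

text \<open>Two-variable formal Laurent series: F r s is the coefficient of u^(-r) v^(-s).
  sh a b F is u^a v^b F.\<close>
definition sh :: "int \<Rightarrow> int \<Rightarrow> (int \<Rightarrow> int \<Rightarrow> 'a) \<Rightarrow> int \<Rightarrow> int \<Rightarrow> 'a" where
  "sh a b F = (\<lambda>r s. F (r + a) (s + b))"

text \<open>Multiplication by (u-v)(u-v-kappa), by -(u-v-kappa), and by (u-v).\<close>
definition opA :: "complex \<Rightarrow> (int \<Rightarrow> int \<Rightarrow> 'a::complex_algebra_1) \<Rightarrow> int \<Rightarrow> int \<Rightarrow> 'a" where
  "opA k F = (\<lambda>r s. sh 2 0 F r s - 2 *\<^sub>C sh 1 1 F r s + sh 0 2 F r s
                     - k *\<^sub>C sh 1 0 F r s + k *\<^sub>C sh 0 1 F r s)"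

definition opB :: "complex \<Rightarrow> (int \<Rightarrow> int \<Rightarrow> 'a::complex_algebra_1) \<Rightarrow> int \<Rightarrow> int \<Rightarrow> 'a" where
  "opB k F = (\<lambda>r s. - sh 1 0 F r s + sh 0 1 F r s + k *\<^sub>C F r s)"

definition opC :: "(int \<Rightarrow> int \<Rightarrow> 'a::ring_1) \<Rightarrow> int \<Rightarrow> int \<Rightarrow> 'a" where
  "opC F = (\<lambda>r s. sh 1 0 F r s - sh 0 1 F r s)"

text \<open>Entries of T_1(u) T_2(v): XL tt i k j l is the coefficient of e_ij (x) e_kl,
  i.e. t_ij(u) t_kl(v); entries of T_2(v) T_1(u): XR tt i k j l = t_kl(v) t_ij(u).\<close>
definition XL :: "(nat \<Rightarrow> nat \<Rightarrow> nat \<Rightarrow> 'a::ring_1) \<Rightarrow> nat \<Rightarrow> nat \<Rightarrow> nat \<Rightarrow> nat \<Rightarrow> int \<Rightarrow> int \<Rightarrow> 'a" where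
  "XL tt i k j l = (\<lambda>r s. if 0 \<le> r \<and> 0 \<le> s then tcoef tt i j (nat r) * tcoef tt k l (nat s) else 0)"

definition XR :: "(nat \<Rightarrow> nat \<Rightarrow> nat \<Rightarrow> 'a::ring_1) \<Rightarrow> nat \<Rightarrow> nat \<Rightarrow> nat \<Rightarrow> nat \<Rightarrow> int \<Rightarrow> int \<Rightarrow> 'a" where
  "XR tt i k j l = (\<lambda>r s. if 0 \<le> r \<and> 0 \<le> s then tcoef tt k l (nat s) * tcoef tt i j (nat r) else 0)"

text \<open>The RTT relation  (u-v)(u-v-kappa) R_12(u-v) T_1(u) T_2(v) = T_2(v) T_1(u) (u-v)(u-v-kappa) R_12(u-v),
  with (u-v)(u-v-kappa) R(u-v) = (u-v)(u-v-kappa) - (u-v-kappa) P + (u-v) Q, written entrywise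
  (entry at row (i,k), column (j,l) of End C^N (x) End C^N) and coefficientwise.\<close>
definition RTT :: "cartan_type \<Rightarrow> nat \<Rightarrow> (nat \<Rightarrow> nat \<Rightarrow> nat \<Rightarrow> 'a::complex_algebra_1) \<Rightarrow> bool" where
  "RTT X n tt \<longleftrightarrow>
    (\<forall>i\<in>{1..dimN X n}. \<forall>k\<in>{1..dimN X n}. \<forall>j\<in>{1..dimN X n}. \<forall>l\<in>{1..dimN X n}. \<forall>r s.
       opA (kappa X n) (XL tt i k j l) r s
       + opB (kappa X n) (XL tt k i j l) r s
       + (if k = primed X n i then
            opC (\<lambda>r' s'. \<Sum>p\<in>{1..dimN X n}. theta X n i p *\<^sub>C XL tt p (primed X n p) j l r' s') r s
          else 0)
     = opA (kappa X n) (XR tt i k j l) r s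
       + opB (kappa X n) (XR tt i k l j) r s
       + (if l = primed X n j then
            opC (\<lambda>r' s'. \<Sum>p\<in>{1..dimN X n}. theta X n p j *\<^sub>C XR tt i k p (primed X n p) r' s') r s
          else 0))"

text \<open>For a k x k matrix A (indices 1..k) over a ring, B is an inverse of the submatrix A^{pq}
  (rows {1..k}-{p}, columns {1..k}-{q}); B is indexed by columns x rows and is zero elsewhere.\<close>
definition is_inv_minor :: "nat \<Rightarrow> (nat \<Rightarrow> nat \<Rightarrow> 'b::ring_1) \<Rightarrow> nat \<Rightarrow> nat \<Rightarrow> (nat \<Rightarrow> nat \<Rightarrow> 'b) \<Rightarrow> bool" where
  "is_inv_minor k A p q B \<longleftrightarrow>
     (\<forall>a b. \<not> (a \<in> {1..k} - {q} \<and> b \<in> {1..k} - {p}) \<longrightarrow> B a b = 0) \<and>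
     (\<forall>a\<in>{1..k} - {p}. \<forall>b\<in>{1..k} - {p}.
        (\<Sum>c\<in>{1..k} - {q}. A a c * B c b) = (if a = b then 1 else 0)) \<and>
     (\<forall>a\<in>{1..k} - {q}. \<forall>b\<in>{1..k} - {q}.
        (\<Sum>c\<in>{1..k} - {p}. B a c * A c b) = (if a = b then 1 else 0))"

definition quasidet :: "nat \<Rightarrow> (nat \<Rightarrow> nat \<Rightarrow> 'b::ring_1) \<Rightarrow> nat \<Rightarrow> nat \<Rightarrow> 'b" where
  "quasidet k A p q =
     A p q - (\<Sum>a\<in>{1..k} - {q}. \<Sum>b\<in>{1..k} - {p}.
                A p a * (THE B. is_inv_minor k A p q B) a b * A b q)"

definition psi :: "(nat \<Rightarrow> nat \<Rightarrow> nat \<Rightarrow> 'a::ring_1) \<Rightarrow> nat \<Rightarrow> nat \<Rightarrow> nat \<Rightarrow> 'a fps" where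
  "psi tt m i j = quasidet (m + 1)
      (\<lambda>r c. tser tt (if r \<le> m then r else i) (if c \<le> m then c else j)) (m + 1) (m + 1)"

end

theory Submission
  imports Defs
begin

text \<open>For a, b \<le> m, commutation with t_ab^(r) u^-r is a derivation of the algebra of series.
  On the entries t_cd(u) with c, d \<le> (m+1)' the RTT relation has no Q-term, and it shows that
  this derivation acts as t_cd \<mapsto> x_c t_ad - t_cb y_d for certain series x_c, y_d: an
  infinitesimal operation adding multiples of row a to the rows and multiples of column b to
  the columns. As a and b index rows and columns of the inverted block A_II, such a derivation
  kills the quasideterminant A_kk - A_kI A_II^-1 A_Ik; its image is a multiple of
  A_ak - A_aI A_II^-1 A_Ik = 0.\<close>


section \<open>Derivations and Schur complements\<close>

definition commutator :: "'a::ring \<Rightarrow> 'a \<Rightarrow> 'a" where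
  "commutator x y = x * y - y * x"

definition derivation :: "('a::ring \<Rightarrow> 'a) \<Rightarrow> bool" where
  "derivation D \<longleftrightarrow> (\<forall>x y. D (x + y) = D x + D y) \<and> (\<forall>x y. D (x * y) = D x * y + x * D y)"

lemma derivation_commutator: "derivation (commutator g)"
  by (simp add: derivation_def commutator_def algebra_simps)

lemma derivation_add: "derivation D \<Longrightarrow> D (x + y) = D x + D y"
  and derivation_mult: "derivation D \<Longrightarrow> D (x * y) = D x * y + x * D y"
  by (simp_all add: derivation_def)

lemma derivation_zero: "derivation D \<Longrightarrow> D 0 = 0"
  using derivation_add[of D 0 0] by simp

lemma derivation_diff: "derivation D \<Longrightarrow> D (x - y) = D x - D y"
  using derivation_add[of D "x - y" y] by (simp add: algebra_simps)

lemma derivation_sum: "derivation D \<Longrightarrow> D (\<Sum>i\<in>S. f i) = (\<Sum>i\<in>S. D (f i))"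
  by (induction S rule: infinite_finite_induct) (simp_all add: derivation_zero derivation_add)

lemma sum_mult_sum_assoc:
  fixes P :: "'i \<Rightarrow> 'a::semiring_0"
  shows "(\<Sum>c\<in>I. P c * (\<Sum>e\<in>J. Q c e * R e)) = (\<Sum>e\<in>J. (\<Sum>c\<in>I. P c * Q c e) * R e)"
  by (simp add: sum_distrib_left sum_distrib_right mult.assoc) (rule sum.swap)

lemma sum_mult_delta_right:
  fixes P :: "'i \<Rightarrow> 'a::semiring_1"
  shows "finite I \<Longrightarrow> y \<in> I \<Longrightarrow> (\<Sum>c\<in>I. P c * (if c = y then 1 else 0)) = P y"
  by (simp add: if_distrib cong: if_cong)

lemma sum_mult_delta_left:
  fixes P :: "'i \<Rightarrow> 'a::semiring_1"
  shows "finite I \<Longrightarrow> x \<in> I \<Longrightarrow> (\<Sum>c\<in>I. (if x = c then 1 else 0) * P c) = P x"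
  by (simp add: if_distrib[of "\<lambda>z. z * _"] cong: if_cong)

lemma right_inverse_solve_row:
  fixes A B :: "'i \<Rightarrow> 'i \<Rightarrow> 'a::ring_1"
  assumes "finite I" and right_inv: "\<And>x y. x \<in> I \<Longrightarrow> y \<in> I \<Longrightarrow> (\<Sum>c\<in>I. A x c * B c y) = (if x = y then 1 else 0)"
    and u: "\<And>h. h \<in> I \<Longrightarrow> (\<Sum>f\<in>I. u f * A f h) = r h" and "g \<in> I"
  shows "u g = (\<Sum>h\<in>I. r h * B h g)"
proof -
  have "(\<Sum>h\<in>I. r h * B h g) = (\<Sum>h\<in>I. (\<Sum>f\<in>I. u f * A f h) * B h g)"
    using u by simp
  also have "\<dots> = (\<Sum>f\<in>I. u f * (\<Sum>h\<in>I. A f h * B h g))"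
    by (rule sum_mult_sum_assoc[symmetric])
  also have "\<dots> = (\<Sum>f\<in>I. u f * (if f = g then 1 else 0))"
    using right_inv \<open>g \<in> I\<close> by simp
  also have "\<dots> = u g"
    using assms by (simp add: sum_mult_delta_right)
  finally show ?thesis ..
qed

lemma right_inverse_cancel:
  fixes A B :: "'i \<Rightarrow> 'i \<Rightarrow> 'a::ring_1"
  assumes "finite I" and right_inv: "\<And>x y. x \<in> I \<Longrightarrow> y \<in> I \<Longrightarrow> (\<Sum>c\<in>I. A x c * B c y) = (if x = y then 1 else 0)"
    and "a \<in> I"
  shows "(\<Sum>d\<in>I. A a d * (\<Sum>f\<in>I. B d f * w f)) = w a"
  using assms by (simp add: sum_mult_sum_assoc sum_mult_delta_left)

lemma left_inverse_cancel:
  fixes A B :: "'i \<Rightarrow> 'i \<Rightarrow> 'a::ring_1"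
  assumes "finite I" and left_inv: "\<And>x y. x \<in> I \<Longrightarrow> y \<in> I \<Longrightarrow> (\<Sum>c\<in>I. B x c * A c y) = (if x = y then 1 else 0)"
    and "h \<in> I"
  shows "(\<Sum>f\<in>I. (\<Sum>e\<in>I. v e * B e f) * A f h) = v h"
  using assms by (simp add: sum_mult_sum_assoc[symmetric] sum_mult_delta_right)

lemma derivation_schur_complement:
  fixes A B :: "'i \<Rightarrow> 'i \<Rightarrow> 'a::ring_1" and k :: 'i
  assumes D: "derivation D" and fin: "finite I"
    and right_inv: "\<And>x y. x \<in> I \<Longrightarrow> y \<in> I \<Longrightarrow> (\<Sum>c\<in>I. A x c * B c y) = (if x = y then 1 else 0)"
    and left_inv: "\<And>x y. x \<in> I \<Longrightarrow> y \<in> I \<Longrightarrow> (\<Sum>c\<in>I. B x c * A c y) = (if x = y then 1 else 0)"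
  defines "\<rho> \<equiv> \<lambda>h. D (A k h) - (\<Sum>f\<in>I. (\<Sum>e\<in>I. A k e * B e f) * D (A f h))"
  shows "D (A k k - (\<Sum>e\<in>I. \<Sum>f\<in>I. A k e * B e f * A f k))
       = \<rho> k - (\<Sum>h\<in>I. \<rho> h * (\<Sum>f\<in>I. B h f * A f k))"
proof -
  define v where "v f = (\<Sum>e\<in>I. A k e * B e f)" for f
  have \<rho>_v: "\<rho> h = D (A k h) - (\<Sum>f\<in>I. v f * D (A f h))" for h
    by (simp add: \<rho>_def v_def)
  have schur: "(\<Sum>e\<in>I. \<Sum>f\<in>I. A k e * B e f * A f k) = (\<Sum>f\<in>I. v f * A f k)"
    unfolding v_def by (subst sum.swap) (simp add: sum_distrib_right)
  \<comment> \<open>Differentiating \<open>v A\<^sub>I\<^sub>I = A\<^sub>k\<^sub>I\<close> gives \<open>D(v) A\<^sub>I\<^sub>I = \<rho>\<close>, hence \<open>D(v) = \<rho> B\<close>.\<close>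
  have Dv_A: "(\<Sum>f\<in>I. D (v f) * A f h) = \<rho> h" if "h \<in> I" for h
  proof -
    have "D (A k h) = D (\<Sum>f\<in>I. v f * A f h)"
      using left_inverse_cancel[OF fin left_inv that] by (simp add: v_def)
    then show ?thesis
      by (simp add: \<rho>_v derivation_sum[OF D] derivation_mult[OF D] sum.distrib)
  qed
  have Dv: "D (v g) = (\<Sum>h\<in>I. \<rho> h * B h g)" if "g \<in> I" for g
    using fin right_inv Dv_A that by (rule right_inverse_solve_row)
  have "D (A k k - (\<Sum>f\<in>I. v f * A f k))
      = \<rho> k - (\<Sum>f\<in>I. (\<Sum>h\<in>I. \<rho> h * B h f) * A f k)"
    by (simp add: \<rho>_v Dv derivation_diff[OF D] derivation_sum[OF D] derivation_mult[OF D]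
        sum.distrib)
  then show ?thesis
    by (simp add: schur sum_mult_sum_assoc)
qed

lemma derivation_schur_complement_eq_0:
  fixes A B :: "'i \<Rightarrow> 'i \<Rightarrow> 'a::ring_1"
  assumes D: "derivation D" and fin: "finite I"
    and right_inv: "\<And>x y. x \<in> I \<Longrightarrow> y \<in> I \<Longrightarrow> (\<Sum>c\<in>I. A x c * B c y) = (if x = y then 1 else 0)"
    and left_inv: "\<And>x y. x \<in> I \<Longrightarrow> y \<in> I \<Longrightarrow> (\<Sum>c\<in>I. B x c * A c y) = (if x = y then 1 else 0)"
    and "a \<in> I" "b \<in> I"
    and DA: "\<And>c d. c \<in> insert k I \<Longrightarrow> d \<in> insert k I \<Longrightarrow> D (A c d) = x c * A a d - A c b * y d"
  shows "D (A k k - (\<Sum>e\<in>I. \<Sum>f\<in>I. A k e * B e f * A f k)) = 0"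
proof -
  define v where "v f = (\<Sum>e\<in>I. A k e * B e f)" for f
  define \<gamma> where "\<gamma> = x k - (\<Sum>f\<in>I. v f * x f)"
  have \<rho>: "D (A k h) - (\<Sum>f\<in>I. v f * D (A f h)) = \<gamma> * A a h" if "h \<in> insert k I" for h
  proof -
    have vAb: "(\<Sum>f\<in>I. v f * A f b) = A k b"
      unfolding v_def by (rule left_inverse_cancel[OF fin left_inv \<open>b \<in> I\<close>])
    have "(\<Sum>f\<in>I. v f * D (A f h)) = (\<Sum>f\<in>I. v f * x f * A a h - v f * A f b * y h)"
      using DA that by (intro sum.cong) (auto simp: right_diff_distrib mult.assoc)
    also have "\<dots> = (\<Sum>f\<in>I. v f * x f) * A a h - A k b * y h"
      by (simp add: sum_subtractf sum_distrib_right flip: vAb)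
    finally show ?thesis
      using DA that by (simp add: \<gamma>_def left_diff_distrib)
  qed
  have "D (A k k - (\<Sum>e\<in>I. \<Sum>f\<in>I. A k e * B e f * A f k))
      = \<gamma> * A a k - (\<Sum>h\<in>I. \<gamma> * A a h * (\<Sum>f\<in>I. B h f * A f k))"
    using derivation_schur_complement[OF D fin right_inv left_inv, of k] \<rho>
    by (simp add: v_def cong: sum.cong)
  also have "\<dots> = \<gamma> * (A a k - (\<Sum>h\<in>I. A a h * (\<Sum>f\<in>I. B h f * A f k)))"
    by (simp add: right_diff_distrib sum_distrib_left mult.assoc)
  also have "\<dots> = 0"
    by (simp add: right_inverse_cancel[OF fin right_inv \<open>a \<in> I\<close>])
  finally show ?thesis .
qed

section \<open>Inverse matrices of formal power series\<close>

text \<open>Coefficient \<open>t\<close> of \<open>A R = 1\<close>, with \<open>A\<close> having constant term \<open>1\<close>, determines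
  coefficient \<open>t\<close> of \<open>R\<close> from the lower ones.\<close>
function fps_right_inverse_coeff :: "('i \<Rightarrow> 'i \<Rightarrow> 'b::ring_1 fps) \<Rightarrow> 'i set \<Rightarrow> nat \<Rightarrow> 'i \<Rightarrow> 'i \<Rightarrow> 'b" where
  "fps_right_inverse_coeff A I t x y = (if t = 0 then (if x = y then 1 else 0)
     else - (\<Sum>w\<in>I. \<Sum>p\<in>{1..t}. fps_nth (A x w) p * fps_right_inverse_coeff A I (t - p) w y))"
  by auto
termination by (relation "measure (\<lambda>(A, I, t, x, y). t)") auto

declare fps_right_inverse_coeff.simps [simp del]

lemma fps_matrix_right_inverse:
  fixes A :: "'i \<Rightarrow> 'i \<Rightarrow> 'b::ring_1 fps"
  assumes fin: "finite I"
    and A0: "\<And>x y. x \<in> I \<Longrightarrow> y \<in> I \<Longrightarrow> fps_nth (A x y) 0 = (if x = y then 1 else 0)"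
  obtains R where "\<And>x y. fps_nth (R x y) 0 = (if x = y then 1 else 0)"
    and "\<And>x y. x \<in> I \<Longrightarrow> y \<in> I \<Longrightarrow> (\<Sum>c\<in>I. A x c * R c y) = (if x = y then 1 else 0)"
proof
  define R where "R x y = Abs_fps (\<lambda>t. fps_right_inverse_coeff A I t x y)" for x y
  show "fps_nth (R x y) 0 = (if x = y then 1 else 0)" for x y
    by (simp add: R_def fps_right_inverse_coeff.simps)
  fix x y assume x: "x \<in> I" and y: "y \<in> I"
  show "(\<Sum>c\<in>I. A x c * R c y) = (if x = y then 1 else 0)"
  proof (rule fps_ext)
    fix t
    have "fps_nth (\<Sum>c\<in>I. A x c * R c y) t
        = (\<Sum>c\<in>I. fps_nth (A x c) 0 * fps_right_inverse_coeff A I t c y)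
          + (\<Sum>c\<in>I. \<Sum>p\<in>{1..t}. fps_nth (A x c) p * fps_right_inverse_coeff A I (t - p) c y)"
      by (simp add: R_def fps_sum_nth fps_mult_nth sum.atLeast_Suc_atMost sum.distrib)
    also have "\<dots> = fps_right_inverse_coeff A I t x y
          + (\<Sum>c\<in>I. \<Sum>p\<in>{1..t}. fps_nth (A x c) p * fps_right_inverse_coeff A I (t - p) c y)"
      using A0 x fin by (simp add: sum_mult_delta_left cong: sum.cong)
    also have "\<dots> = fps_nth (if x = y then 1 else 0) t"
      by (cases "t = 0") (simp_all add: fps_right_inverse_coeff.simps[of A I _ x y])
    finally show "fps_nth (\<Sum>c\<in>I. A x c * R c y) t = fps_nth (if x = y then 1 else 0) t" .
  qed
qed

lemma fps_matrix_inverse: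
  fixes A :: "'i \<Rightarrow> 'i \<Rightarrow> 'b::ring_1 fps"
  assumes fin: "finite I"
    and A0: "\<And>x y. x \<in> I \<Longrightarrow> y \<in> I \<Longrightarrow> fps_nth (A x y) 0 = (if x = y then 1 else 0)"
  obtains B where "\<And>x y. x \<in> I \<Longrightarrow> y \<in> I \<Longrightarrow> (\<Sum>c\<in>I. A x c * B c y) = (if x = y then 1 else 0)"
    and "\<And>x y. x \<in> I \<Longrightarrow> y \<in> I \<Longrightarrow> (\<Sum>c\<in>I. B x c * A c y) = (if x = y then 1 else 0)"
proof -
  obtain R where R0: "\<And>x y. fps_nth (R x y) 0 = (if x = y then 1 else 0)"
    and AR: "\<And>x y. x \<in> I \<Longrightarrow> y \<in> I \<Longrightarrow> (\<Sum>c\<in>I. A x c * R c y) = (if x = y then 1 else 0)"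
    using fps_matrix_right_inverse[OF fin A0] by metis
  obtain R' where RR': "\<And>x y. x \<in> I \<Longrightarrow> y \<in> I \<Longrightarrow> (\<Sum>c\<in>I. R x c * R' c y) = (if x = y then 1 else 0)"
    using fps_matrix_right_inverse[where A = R, OF fin R0] by metis
  \<comment> \<open>\<open>A = A (R R') = (A R) R' = R'\<close>, so \<open>R\<close> is also a left inverse.\<close>
  have "R' x y = A x y" if "x \<in> I" "y \<in> I" for x y
  proof -
    have "A x y = (\<Sum>c\<in>I. A x c * (if c = y then 1 else 0))"
      using that fin by (simp add: sum_mult_delta_right)
    also have "\<dots> = (\<Sum>c\<in>I. A x c * (\<Sum>e\<in>I. R c e * R' e y))"
      using RR' that by (intro sum.cong) simp_all
    also have "\<dots> = (\<Sum>e\<in>I. (\<Sum>c\<in>I. A x c * R c e) * R' e y)"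
      by (rule sum_mult_sum_assoc)
    also have "\<dots> = (\<Sum>e\<in>I. (if x = e then 1 else 0) * R' e y)"
      using AR that by (intro sum.cong) simp_all
    also have "\<dots> = R' x y"
      using that fin by (simp add: sum_mult_delta_left)
    finally show ?thesis ..
  qed
  then have "(\<Sum>c\<in>I. R x c * A c y) = (if x = y then 1 else 0)" if "x \<in> I" "y \<in> I" for x y
    using RR'[OF that] that by (simp cong: sum.cong)
  with AR show thesis by (rule that)
qed

lemma is_inv_minor_unique:
  assumes "is_inv_minor k A p q B1" and "is_inv_minor k A p q B2"
  shows "B1 = B2"
proof (intro ext)
  fix x y
  let ?P = "{1..k} - {p}" and ?Q = "{1..k} - {q}"
  show "B1 x y = B2 x y"
  proof (cases "x \<in> ?Q \<and> y \<in> ?P")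
    case True
    have "B1 x y = (\<Sum>c\<in>?P. B1 x c * (\<Sum>e\<in>?Q. A c e * B2 e y))"
      using assms(2) True by (simp add: is_inv_minor_def sum_mult_delta_right)
    also have "\<dots> = B2 x y"
      using assms(1) True by (simp add: is_inv_minor_def sum_mult_sum_assoc sum_mult_delta_left)
    finally show ?thesis .
  next
    case False
    with assms show ?thesis by (simp add: is_inv_minor_def)
  qed
qed

lemma quasidet_eq_schur_complement:
  fixes A :: "nat \<Rightarrow> nat \<Rightarrow> 'b::ring_1 fps"
  assumes A0: "\<And>x y. x \<in> {1..m} \<Longrightarrow> y \<in> {1..m} \<Longrightarrow> fps_nth (A x y) 0 = (if x = y then 1 else 0)"
  obtains B where "\<And>x y. x \<in> {1..m} \<Longrightarrow> y \<in> {1..m} \<Longrightarrow> (\<Sum>c\<in>{1..m}. A x c * B c y) = (if x = y then 1 else 0)"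
    and "\<And>x y. x \<in> {1..m} \<Longrightarrow> y \<in> {1..m} \<Longrightarrow> (\<Sum>c\<in>{1..m}. B x c * A c y) = (if x = y then 1 else 0)"
    and "quasidet (Suc m) A (Suc m) (Suc m)
           = A (Suc m) (Suc m) - (\<Sum>e\<in>{1..m}. \<Sum>f\<in>{1..m}. A (Suc m) e * B e f * A f (Suc m))"
proof -
  let ?I = "{1..m}"
  obtain B0 where AB: "\<And>x y. x \<in> ?I \<Longrightarrow> y \<in> ?I \<Longrightarrow> (\<Sum>c\<in>?I. A x c * B0 c y) = (if x = y then 1 else 0)"
    and BA: "\<And>x y. x \<in> ?I \<Longrightarrow> y \<in> ?I \<Longrightarrow> (\<Sum>c\<in>?I. B0 x c * A c y) = (if x = y then 1 else 0)"
    using fps_matrix_inverse[OF _ A0] by blast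
  define B where "B x y = (if x \<in> ?I \<and> y \<in> ?I then B0 x y else 0)" for x y
  have AB': "(\<Sum>c\<in>?I. A x c * B c y) = (if x = y then 1 else 0)" if "x \<in> ?I" "y \<in> ?I" for x y
    using AB[OF that] that by (simp add: B_def)
  have BA': "(\<Sum>c\<in>?I. B x c * A c y) = (if x = y then 1 else 0)" if "x \<in> ?I" "y \<in> ?I" for x y
    using BA[OF that] that by (simp add: B_def)
  have minor: "{1..Suc m} - {Suc m} = ?I" by auto
  have "is_inv_minor (Suc m) A (Suc m) (Suc m) B"
    unfolding is_inv_minor_def minor using AB' BA' by (simp add: B_def)
  then have "(THE B. is_inv_minor (Suc m) A (Suc m) (Suc m) B) = B"
    using is_inv_minor_unique by blast
  then have "quasidet (Suc m) A (Suc m) (Suc m)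
      = A (Suc m) (Suc m) - (\<Sum>e\<in>?I. \<Sum>f\<in>?I. A (Suc m) e * B e f * A f (Suc m))"
    unfolding quasidet_def minor by simp
  with AB' BA' show thesis by (rule that)
qed

section \<open>Consequences of the RTT relation\<close>

lemma scaleC_zero_right [simp]: "c *\<^sub>C (0::'a::complex_algebra_1) = 0"
  by (metis add_cancel_right_right scaleC_add_right)

lemma scaleC_diff_right: "c *\<^sub>C (x - y) = c *\<^sub>C x - c *\<^sub>C (y::'a::complex_algebra_1)"
  by (metis add_diff_cancel diff_add_cancel scaleC_add_right)

lemma scaleC_two: "2 *\<^sub>C x = x + (x::'a::complex_algebra_1)"
  by (metis one_add_one scaleC_add_left scaleC_one)

lemma shifted_recurrence_eq_0:
  fixes G :: "int \<Rightarrow> int \<Rightarrow> 'a::complex_algebra_1"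
  assumes rec: "\<And>r s. G (r + 1) s = G r (s + 1) + k *\<^sub>C G r s"
    and vanish: "\<And>r s. r < r0 \<Longrightarrow> G r s = 0"
  shows "G r s = 0"
proof -
  have "\<forall>s. G (r0 - 1 + int t) s = 0" for t
  proof (induction t)
    case 0
    then show ?case using vanish by simp
  next
    case (Suc t)
    then show ?case
      using rec[of "r0 - 1 + int t"] by (simp add: add.assoc)
  qed
  from this[of "nat (r - r0 + 1)"] vanish show ?thesis
    by (cases "r < r0") simp_all
qed

lemma RTT_commutator_relation:
  fixes tt :: "nat \<Rightarrow> nat \<Rightarrow> nat \<Rightarrow> 'a::complex_algebra_1"
  assumes R: "RTT X n tt"
    and ac: "a \<in> {1..dimN X n}" "b \<in> {1..dimN X n}" "c \<in> {1..dimN X n}" "d \<in> {1..dimN X n}"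
    and ne: "c \<noteq> primed X n a" "d \<noteq> primed X n b"
  shows "commutator (tcoef tt a b (Suc r)) (tcoef tt c d s) - commutator (tcoef tt a b r) (tcoef tt c d (Suc s))
       = tcoef tt c b r * tcoef tt a d s - tcoef tt c b s * tcoef tt a d r"
proof -
  define k where "k = kappa X n"
  define F1 where "F1 = XL tt a c b d"
  define F2 where "F2 = XR tt a c b d"
  define F3 where "F3 = XL tt c a b d"
  define F4 where "F4 = XR tt a c d b"
  have RTT_entry: "opA k F1 r s + opB k F3 r s = opA k F2 r s + opB k F4 r s" for r s
    using R[unfolded RTT_def, rule_format, OF ac(1) ac(3) ac(2) ac(4), of r s] ne
    unfolding k_def F1_def F2_def F3_def F4_def by simp
  \<comment> \<open>Both sides of the entry share the factor \<open>u - v - \<kappa>\<close>; \<open>G\<close> is what remains after cancelling it.\<close>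
  define G where "G r s = (F1 (r + 1) s - F1 r (s + 1)) - (F2 (r + 1) s - F2 r (s + 1)) - F3 r s + F4 r s" for r s
  have "G (r + 1) s = G r (s + 1) + k *\<^sub>C G r s" for r s
  proof -
    have "G (r + 1) s - G r (s + 1) - k *\<^sub>C G r s
        = (opA k F1 r s + opB k F3 r s) - (opA k F2 r s + opB k F4 r s)"
      unfolding G_def opA_def opB_def sh_def
      by (simp add: scaleC_diff_right scaleC_add_right scaleC_two algebra_simps)
    then show ?thesis
      using RTT_entry[of r s] by (simp add: algebra_simps)
  qed
  moreover have "G r s = 0" if "r < -1" for r s
    using that unfolding G_def F1_def F2_def F3_def F4_def XL_def XR_def by auto
  ultimately have "G (int r) (int s) = 0"
    by (rule shifted_recurrence_eq_0)
  then show ?thesis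
    unfolding G_def F1_def F2_def F3_def F4_def XL_def XR_def commutator_def
    by (simp add: nat_add_distrib algebra_simps)
qed

lemma tser_nth [simp]: "fps_nth (tser tt i j) s = tcoef tt i j s"
  by (simp add: tser_def)

lemma fps_nth_commutator_const [simp]:
  "fps_nth (commutator (fps_const x) F) s = commutator x (fps_nth F s)"
  by (simp add: commutator_def)

lemma fps_X_power_mult_left_commute: "fps_X ^ k * (F * G) = F * (fps_X ^ k * G)"
  by (simp add: fps_mult_fps_X_power_commute mult.assoc)

lemma commutator_fps_X_power_left:
  "commutator (G * fps_X ^ r) F = fps_X ^ r * commutator G F"
  by (simp add: commutator_def algebra_simps fps_mult_fps_X_power_commute mult.assoc)

lemma fps_nth_commutator_monom:
  "fps_nth (commutator (fps_const x * fps_X ^ r) F) (s + r) = commutator x (fps_nth F s)"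
  by (simp add: commutator_fps_X_power_left fps_X_power_mult_nth)

lemma commutator_monom_tser:
  fixes tt :: "nat \<Rightarrow> nat \<Rightarrow> nat \<Rightarrow> 'a::ring_1"
  assumes rel: "\<And>r s. commutator (tcoef tt a b (Suc r)) (tcoef tt c d s)
      - commutator (tcoef tt a b r) (tcoef tt c d (Suc s))
      = tcoef tt c b r * tcoef tt a d s - tcoef tt c b s * tcoef tt a d r"
  shows "commutator (fps_const (tcoef tt a b r) * fps_X ^ r) (tser tt c d)
     = (\<Sum>q<r. fps_X ^ Suc q * fps_const (tcoef tt c b q)) * tser tt a d
       - tser tt c b * (\<Sum>q<r. fps_X ^ Suc q * fps_const (tcoef tt a d q))"
proof -
  define V where "V q = fps_const (tcoef tt c b q) * tser tt a d - tser tt c b * fps_const (tcoef tt a d q)"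
    for q
  have step: "fps_X * commutator (fps_const (tcoef tt a b (Suc q))) (tser tt c d)
      = commutator (fps_const (tcoef tt a b q)) (tser tt c d) + fps_X * V q" for q
  proof (rule fps_ext)
    fix s
    show "fps_nth (fps_X * commutator (fps_const (tcoef tt a b (Suc q))) (tser tt c d)) s
        = fps_nth (commutator (fps_const (tcoef tt a b q)) (tser tt c d) + fps_X * V q) s"
    proof (cases s)
      case 0
      then show ?thesis by (simp add: commutator_def tcoef_def)
    next
      case (Suc s')
      then show ?thesis using rel[of q s'] by (simp add: V_def algebra_simps)
    qed
  qed
  have "fps_X ^ r * commutator (fps_const (tcoef tt a b r)) (tser tt c d) = (\<Sum>q<r. fps_X ^ Suc q * V q)"
  proof (induction r)
    case 0
    show ?case by (simp add: commutator_def tcoef_def)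
  next
    case (Suc r)
    have "fps_X ^ Suc r * commutator (fps_const (tcoef tt a b (Suc r))) (tser tt c d)
        = fps_X ^ r * commutator (fps_const (tcoef tt a b r)) (tser tt c d) + fps_X ^ Suc r * V r"
      by (simp only: power_Suc2 mult.assoc step distrib_left)
    with Suc.IH show ?case by simp
  qed
  moreover have "fps_X ^ Suc q * V q = fps_X ^ Suc q * fps_const (tcoef tt c b q) * tser tt a d
      - tser tt c b * (fps_X ^ Suc q * fps_const (tcoef tt a d q))" for q
    by (simp add: V_def right_diff_distrib mult.assoc fps_X_power_mult_left_commute del: power_Suc)
  ultimately show ?thesis
    by (simp add: commutator_fps_X_power_left sum_subtractf sum_distrib_left sum_distrib_right
        del: power_Suc)
qed

lemma RTT_commutator_monom_tser:
  fixes tt :: "nat \<Rightarrow> nat \<Rightarrow> nat \<Rightarrow> 'a::complex_algebra_1"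
  assumes "RTT X n tt"
    and "a \<in> {1..m}" "b \<in> {1..m}" "c \<in> {1..dimN X n - m}" "d \<in> {1..dimN X n - m}"
  shows "commutator (fps_const (tcoef tt a b r) * fps_X ^ r) (tser tt c d)
     = (\<Sum>q<r. fps_X ^ Suc q * fps_const (tcoef tt c b q)) * tser tt a d
       - tser tt c b * (\<Sum>q<r. fps_X ^ Suc q * fps_const (tcoef tt a d q))"
  by (rule commutator_monom_tser, rule RTT_commutator_relation)
    (use assms in \<open>auto simp: primed_def\<close>)

lemma derivation_psi_eq_0:
  fixes tt :: "nat \<Rightarrow> nat \<Rightarrow> nat \<Rightarrow> 'a::ring_1"
  assumes D: "derivation D"
    and a: "a \<in> {1..m}" and b: "b \<in> {1..m}" and "i \<in> {m+1..M}" and "j \<in> {m+1..M}"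
    and DT: "\<And>c d. c \<in> {1..M} \<Longrightarrow> d \<in> {1..M} \<Longrightarrow>
      D (tser tt c d) = \<xi> c * tser tt a d - tser tt c b * \<eta> d"
  shows "D (psi tt m i j) = 0"
proof -
  define row where "row c = (if c \<le> m then c else i)" for c
  define col where "col d = (if d \<le> m then d else j)" for d
  define A where "A = (\<lambda>c d. tser tt (row c) (col d))"
  have A0: "fps_nth (A x y) 0 = (if x = y then 1 else 0)" if "x \<in> {1..m}" "y \<in> {1..m}" for x y
    using that by (simp add: A_def row_def col_def tcoef_def)
  obtain B where AB: "\<And>x y. x \<in> {1..m} \<Longrightarrow> y \<in> {1..m} \<Longrightarrow> (\<Sum>c\<in>{1..m}. A x c * B c y) = (if x = y then 1 else 0)"
    and BA: "\<And>x y. x \<in> {1..m} \<Longrightarrow> y \<in> {1..m} \<Longrightarrow> (\<Sum>c\<in>{1..m}. B x c * A c y) = (if x = y then 1 else 0)"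
    and qd: "quasidet (Suc m) A (Suc m) (Suc m)
      = A (Suc m) (Suc m) - (\<Sum>e\<in>{1..m}. \<Sum>f\<in>{1..m}. A (Suc m) e * B e f * A f (Suc m))"
    by (rule quasidet_eq_schur_complement[of m A, OF A0]) (assumption | rule that)+
  have psi_A: "psi tt m i j = quasidet (Suc m) A (Suc m) (Suc m)"
    by (simp add: psi_def A_def row_def col_def)
  have DA: "D (A c d) = \<xi> (row c) * A a d - A c b * \<eta> (col d)"
    if "c \<in> insert (Suc m) {1..m}" "d \<in> insert (Suc m) {1..m}" for c d
    using DT[of "row c" "col d"] that assms(4,5) a b by (auto simp: A_def row_def col_def)
  show ?thesis
    unfolding psi_A qd using D
    by (rule derivation_schur_complement_eq_0[where x = "\<lambda>c. \<xi> (row c)" and y = "\<lambda>d. \<eta> (col d)"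
          and a = a and b = b])
      (rule finite_atLeastAtMost AB BA DA a b | assumption)+
qed

theorem corollary3p10:
  fixes X :: cartan_type and n m :: nat
    and tt :: "nat \<Rightarrow> nat \<Rightarrow> nat \<Rightarrow> 'a::complex_algebra_1"
  assumes "1 \<le> n"
    and "1 \<le> m"
    and "if X = TypeB then m \<le> n else m \<le> n - 1"
    and "RTT X n tt"
    and "a \<in> {1..m}" and "b \<in> {1..m}"
    and "i \<in> {m+1..primed X n (m+1)}" and "j \<in> {m+1..primed X n (m+1)}"
  shows "\<forall>r s. tcoef tt a b r * fps_nth (psi tt m i j) s
             = fps_nth (psi tt m i j) s * tcoef tt a b r"
proof (intro allI)
  fix r s
  have "commutator (fps_const (tcoef tt a b r) * fps_X ^ r) (psi tt m i j) = 0"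
    using assms(7,8)
    by (intro derivation_psi_eq_0[OF derivation_commutator assms(5,6), where M = "dimN X n - m"
          and \<xi> = "\<lambda>c. \<Sum>q<r. fps_X ^ Suc q * fps_const (tcoef tt c b q)"
          and \<eta> = "\<lambda>d. \<Sum>q<r. fps_X ^ Suc q * fps_const (tcoef tt a d q)"]
        RTT_commutator_monom_tser[OF assms(4-6)]) (auto simp: primed_def)
  then show "tcoef tt a b r * fps_nth (psi tt m i j) s = fps_nth (psi tt m i j) s * tcoef tt a b r"
    using fps_nth_commutator_monom[of "tcoef tt a b r" r "psi tt m i j" s]
    by (simp add: commutator_def)
qed

end
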